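(* Let $\rho$ be a function quasi-norm over a $\sigma$-finite measure space $(\Omega,\Sigma,\mu)$ with the Fatou property, and let $X$ be a Banach space. If $x$ and $x_n$ ($n\in\mathbb{N}$) are measurable functions $\Omega\to X$ with $\lim_n\rho(\|x-x_n\|)=0$ and $\sup_n\|x_n\|\le g$ a.e. for some absolutely continuous $g\in L_0^+(\mu)$ with $\rho(g)<\infty$, then $\lim_n\rho(\|x_n\|)=\rho(\|x\|)$.
   Context: $L_0^+(\mu)$: measurable functions $\Omega\to[0,\infty]$ modulo a.e. equality. A function quasi-norm is $\rho\colon L_0^+(\mu)\to[0,\infty]$ with (F1) $\rho(tf)=t\rho(f)$, $t\ge0$; (F2) $f\le g$ a.e. $\Rightarrow\rho(f)\le\rho(g)$; (F3) $\rho(\chi_E)<\infty$ if $\mu(E)<\infty$; (F4) for all $E$ with $\mu(E)<\infty$ and $\varepsilon>0$ there is $\delta>0$ with $\mu(A)\le\varepsilon$ whenever $A\subseteq E$ measurable and $\rho(\chi_A)\le\delta$; (F5) $\rho(f+g)\le\kappa(\rho(f)+\rho(g))$. Fatou property: $\rho(\lim_nf_n)\le\lim_n\rho(f_n)$ for every non-decreasing $(f_n)$ in $L_0^+(\mu)$. A function $g\in L_0^+(\mu)$ with $\rho(g)<\infty$ is absolutely continuous (w.r.t. $\rho$) if $\lim_n\rho(f_n)=\rho(\lim_nf_n)$ for every non-increasing sequence $(f_n)$ in $L_0^+(\mu)$ with $f_1\le g$. *)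

theory Defs
  imports "HOL-Analysis.Analysis"
begin

text \<open>Elements of L_0^+(mu) are represented by Borel measurable functions
  'a => ennreal; a.e. equality is respected because of (F2) (stated a.e.).\<close>

definition function_quasi_norm ::
  "'a measure \<Rightarrow> (('a \<Rightarrow> ennreal) \<Rightarrow> ennreal) \<Rightarrow> bool" where
  "function_quasi_norm M \<rho> \<longleftrightarrow>
     \<comment> \<open>(F1)\<close>
     (\<forall>f t. f \<in> borel_measurable M \<longrightarrow> t \<ge> 0 \<longrightarrow>
        \<rho> (\<lambda>\<omega>. ennreal t * f \<omega>) = ennreal t * \<rho> f) \<and>
     \<comment> \<open>(F2)\<close>
     (\<forall>f g. f \<in> borel_measurable M \<longrightarrow> g \<in> borel_measurable M \<longrightarrow>
        (AE \<omega> in M. f \<omega> \<le> g \<omega>) \<longrightarrow> \<rho> f \<le> \<rho> g) \<and>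
     \<comment> \<open>(F3)\<close>
     (\<forall>E\<in>sets M. emeasure M E < \<infinity> \<longrightarrow> \<rho> (indicator E) < \<infinity>) \<and>
     \<comment> \<open>(F4)\<close>
     (\<forall>E\<in>sets M. emeasure M E < \<infinity> \<longrightarrow>
        (\<forall>\<epsilon>>0. \<exists>\<delta>>0. \<forall>A\<in>sets M. A \<subseteq> E \<longrightarrow>
           \<rho> (indicator A) \<le> ennreal \<delta> \<longrightarrow> emeasure M A \<le> ennreal \<epsilon>)) \<and>
     \<comment> \<open>(F5)\<close>
     (\<exists>\<kappa>::real. \<forall>f g. f \<in> borel_measurable M \<longrightarrow> g \<in> borel_measurable M \<longrightarrow>
        \<rho> (\<lambda>\<omega>. f \<omega> + g \<omega>) \<le> ennreal \<kappa> * (\<rho> f + \<rho> g))"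

definition fatou_property ::
  "'a measure \<Rightarrow> (('a \<Rightarrow> ennreal) \<Rightarrow> ennreal) \<Rightarrow> bool" where
  "fatou_property M \<rho> \<longleftrightarrow>
     (\<forall>f::nat \<Rightarrow> 'a \<Rightarrow> ennreal. (\<forall>n. f n \<in> borel_measurable M) \<longrightarrow> (AE \<omega> in M. mono (\<lambda>n. f n \<omega>)) \<longrightarrow>
        \<rho> (\<lambda>\<omega>. SUP n. f n \<omega>) \<le> (SUP n. \<rho> (f n)))"

definition absolutely_continuous_fqn ::
  "'a measure \<Rightarrow> (('a \<Rightarrow> ennreal) \<Rightarrow> ennreal) \<Rightarrow> ('a \<Rightarrow> ennreal) \<Rightarrow> bool" where
  "absolutely_continuous_fqn M \<rho> g \<longleftrightarrow>
     g \<in> borel_measurable M \<and> \<rho> g < \<infinity> \<and>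
     (\<forall>f::nat \<Rightarrow> 'a \<Rightarrow> ennreal. (\<forall>n. f n \<in> borel_measurable M) \<longrightarrow> (AE \<omega> in M. antimono (\<lambda>n. f n \<omega>)) \<longrightarrow>
        (AE \<omega> in M. f 0 \<omega> \<le> g \<omega>) \<longrightarrow>
        ((\<lambda>n. \<rho> (f n)) \<longlonglongrightarrow> \<rho> (\<lambda>\<omega>. INF n. f n \<omega>)))"

definition strongly_measurable :: "'a measure \<Rightarrow> ('a \<Rightarrow> 'b::banach) \<Rightarrow> bool" where
  "strongly_measurable M x \<longleftrightarrow>
     (\<exists>s. (\<forall>i. simple_function M (s i)) \<and> (\<forall>\<omega>\<in>space M. (\<lambda>i. s i \<omega>) \<longlonglongrightarrow> x \<omega>))"

end

theory Submission imports Defs begin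

text \<open>By the subsequence principle it suffices that every subsequence of \<open>(x\<^sub>n)\<close> has a
  further subsequence along which the claim holds. Convergence in \<open>\<rho>\<close> yields, via (F4) and
  Borel--Cantelli on a \<open>\<sigma>\<close>-finite exhaustion, a subsequence converging a.e. (Riesz).
  Along it \<open>\<parallel>x\<^sub>n\<parallel> \<rightarrow> \<parallel>x\<parallel>\<close> a.e. below the majorant \<open>g\<close>, so the Fatou property bounds
  \<open>\<rho>(\<parallel>x\<parallel>)\<close> by the lower limit of \<open>\<rho>(\<parallel>x\<^sub>n\<parallel>)\<close>, while absolute continuity of \<open>g\<close>,
  applied to the decreasing tails \<open>sup {\<parallel>x\<^sub>k\<parallel> | k \<ge> n}\<close>, bounds the upper limit by it.\<close>

lemma function_quasi_norm_scale:
  assumes "function_quasi_norm M \<rho>" "f \<in> borel_measurable M" "0 \<le> t"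
  shows "\<rho> (\<lambda>\<omega>. ennreal t * f \<omega>) = ennreal t * \<rho> f"
  using assms unfolding function_quasi_norm_def by (elim conjE) blast

lemma function_quasi_norm_mono:
  assumes "function_quasi_norm M \<rho>" "f \<in> borel_measurable M" "g \<in> borel_measurable M"
    and "AE \<omega> in M. f \<omega> \<le> g \<omega>"
  shows "\<rho> f \<le> \<rho> g"
  using assms unfolding function_quasi_norm_def by (elim conjE) blast

lemma function_quasi_norm_cong_AE:
  assumes "function_quasi_norm M \<rho>" "f \<in> borel_measurable M" "g \<in> borel_measurable M"
    and "AE \<omega> in M. f \<omega> = g \<omega>"
  shows "\<rho> f = \<rho> g"
proof (rule antisym)
  show "\<rho> f \<le> \<rho> g" using assms(4) by (intro function_quasi_norm_mono[OF assms(1-3)]) auto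
  show "\<rho> g \<le> \<rho> f" using assms(4) by (intro function_quasi_norm_mono[OF assms(1,3,2)]) auto
qed

lemma function_quasi_norm_indicator_small:
  assumes "function_quasi_norm M \<rho>" "E \<in> sets M" "emeasure M E < \<infinity>" "0 < \<epsilon>"
  obtains \<delta> where "0 < \<delta>"
    "\<And>A. A \<in> sets M \<Longrightarrow> A \<subseteq> E \<Longrightarrow> \<rho> (indicator A) \<le> ennreal \<delta> \<Longrightarrow> emeasure M A \<le> ennreal \<epsilon>"
  using assms unfolding function_quasi_norm_def by meson

lemma function_quasi_norm_Markov_inequality:
  assumes qn: "function_quasi_norm M \<rho>" and f: "f \<in> borel_measurable M"
    and B: "B \<in> sets M" "B \<subseteq> {\<omega>\<in>space M. ennreal c \<le> f \<omega>}" and "0 < c"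
  shows "\<rho> (indicator B) \<le> ennreal (1/c) * \<rho> f"
proof -
  have "indicator B \<omega> \<le> ennreal (1/c) * f \<omega>" for \<omega>
  proof (cases "\<omega> \<in> B")
    case True
    have "(1::ennreal) = ennreal (1/c) * ennreal c"
      using \<open>0 < c\<close> by (simp flip: ennreal_mult)
    also have "\<dots> \<le> ennreal (1/c) * f \<omega>"
      using True B(2) by (auto intro: mult_left_mono)
    finally show ?thesis using True by simp
  qed simp
  then have "\<rho> (indicator B) \<le> \<rho> (\<lambda>\<omega>. ennreal (1/c) * f \<omega>)"
    using B f by (intro function_quasi_norm_mono[OF qn]) auto
  also have "\<dots> = ennreal (1/c) * \<rho> f"
    using \<open>0 < c\<close> by (intro function_quasi_norm_scale[OF qn f]) simp
  finally show ?thesis .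
qed

lemma function_quasi_norm_tendsto_zero_imp_measure_superlevel_small:
  fixes f :: "nat \<Rightarrow> 'a \<Rightarrow> ennreal"
  assumes qn: "function_quasi_norm M \<rho>" and f: "\<And>n. f n \<in> borel_measurable M"
    and lim: "(\<lambda>n. \<rho> (f n)) \<longlonglongrightarrow> 0"
    and E: "E \<in> sets M" "emeasure M E < \<infinity>" and "0 < c" "0 < \<epsilon>"
  shows "eventually (\<lambda>n. emeasure M (E \<inter> {\<omega>\<in>space M. ennreal c \<le> f n \<omega>}) \<le> ennreal \<epsilon>) sequentially"
proof -
  obtain \<delta> where "0 < \<delta>" and \<delta>: "\<And>A. A \<in> sets M \<Longrightarrow> A \<subseteq> E \<Longrightarrow>
      \<rho> (indicator A) \<le> ennreal \<delta> \<Longrightarrow> emeasure M A \<le> ennreal \<epsilon>"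
    using function_quasi_norm_indicator_small[OF qn E \<open>0 < \<epsilon>\<close>] by blast
  have "0 < ennreal (c * \<delta>)" using \<open>0 < c\<close> \<open>0 < \<delta>\<close> by simp
  with lim have "eventually (\<lambda>n. \<rho> (f n) < ennreal (c * \<delta>)) sequentially"
    by (rule order_tendstoD)
  then show ?thesis
  proof eventually_elim
    case (elim n)
    define A where "A = E \<inter> {\<omega>\<in>space M. ennreal c \<le> f n \<omega>}"
    have A: "A \<in> sets M" using E f[of n] unfolding A_def by measurable
    have "\<rho> (indicator A) \<le> ennreal (1/c) * \<rho> (f n)"
      using A \<open>0 < c\<close> by (intro function_quasi_norm_Markov_inequality[OF qn f]) (auto simp: A_def)
    also have "\<dots> \<le> ennreal (1/c) * ennreal (c * \<delta>)"
      using elim by (intro mult_left_mono) auto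
    also have "\<dots> = ennreal \<delta>"
      using \<open>0 < c\<close> \<open>0 < \<delta>\<close> by (simp flip: ennreal_mult)
    finally show ?case using \<delta>[OF A] unfolding A_def by blast
  qed
qed

lemma strict_mono_choice_eventually:
  assumes "\<And>k. eventually (P k) sequentially"
  obtains s :: "nat \<Rightarrow> nat" where "strict_mono s" "\<And>k. P k (s k)"
proof -
  have "\<exists>m>n. P (Suc k) m" for k n
    using eventually_conj[OF assms[of "Suc k"] eventually_gt_at_top[of n]]
    by (metis (mono_tags, lifting) eventually_sequentially order.refl)
  moreover have "\<exists>m. P 0 m"
    using assms[of 0] by (metis eventually_sequentially order.refl)
  ultimately obtain s where "\<forall>k. P k (s k) \<and> s k < s (Suc k)"
    using dependent_nat_choice[of P "\<lambda>_ n m. n < m"] by metis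
  then have "strict_mono s" "\<And>k. P k (s k)" by (auto simp: strict_mono_Suc_iff)
  then show ?thesis by (rule that)
qed

lemma AE_tendsto_zero_if_superlevel_sets_small:
  fixes u :: "nat \<Rightarrow> 'a \<Rightarrow> ennreal"
  assumes A: "range A \<subseteq> sets M" "(\<Union>k. A k) = space M" "incseq A"
    and u: "\<And>k. u k \<in> borel_measurable M"
    and small: "\<And>k. emeasure M (A k \<inter> {\<omega>\<in>space M. ennreal ((1/2)^k) \<le> u k \<omega>}) \<le> ennreal ((1/2)^k)"
  shows "AE \<omega> in M. (\<lambda>k. u k \<omega>) \<longlonglongrightarrow> 0"
proof -
  define D where "D k = A k \<inter> {\<omega>\<in>space M. ennreal ((1/2)^k) \<le> u k \<omega>}" for k
  have "A k \<in> sets M" for k using A(1) by auto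
  then have D: "D k \<in> sets M" for k
    using u[of k] unfolding D_def by measurable
  have fin: "emeasure M (D k) < \<infinity>" for k
    using small[of k] unfolding D_def by (simp add: le_less_trans[OF _ ennreal_less_top])
  have "measure M (D k) \<le> (1/2)^k" for k
  proof -
    have "ennreal (measure M (D k)) \<le> ennreal ((1/2)^k)"
      using small[of k] fin[of k] unfolding D_def by (simp add: emeasure_eq_ennreal_measure less_top)
    then show ?thesis by (simp add: ennreal_le_iff)
  qed
  then have "summable (\<lambda>k. measure M (D k))"
    by (intro summable_comparison_test'[OF summable_geometric[of "1/2::real"], where N = 0]) auto
  from borel_cantelli_AE1[OF D fin this]
  show ?thesis
  proof eventually_elim
    case (elim \<omega>)
    then have "\<omega> \<in> space M" by (auto simp: eventually_sequentially)
    then obtain m where "\<omega> \<in> A m" using A(2) by auto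
    then have "eventually (\<lambda>k. \<omega> \<in> A k) sequentially"
      using A(3) by (auto simp: eventually_sequentially incseq_def)
    with elim have upper: "eventually (\<lambda>k. u k \<omega> \<le> ennreal ((1/2)^k)) sequentially"
      by eventually_elim (auto simp: D_def \<open>\<omega> \<in> space M\<close>)
    have "(\<lambda>k. ennreal ((1/2)^k)) \<longlonglongrightarrow> 0"
      by (simp add: ennreal_tendsto_0_iff LIMSEQ_power_zero)
    from tendsto_sandwich[OF _ upper tendsto_const this] show ?case by simp
  qed
qed

lemma function_quasi_norm_tendsto_zero_imp_AE_subseq:
  fixes f :: "nat \<Rightarrow> 'a \<Rightarrow> ennreal"
  assumes sf: "sigma_finite_measure M" and qn: "function_quasi_norm M \<rho>"
    and f: "\<And>n. f n \<in> borel_measurable M" and lim: "(\<lambda>n. \<rho> (f n)) \<longlonglongrightarrow> 0"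
  obtains s where "strict_mono s" "AE \<omega> in M. (\<lambda>k. f (s k) \<omega>) \<longlonglongrightarrow> 0"
proof -
  obtain A :: "nat \<Rightarrow> 'a set" where A: "range A \<subseteq> sets M" "(\<Union>i. A i) = space M"
      "\<And>i. emeasure M (A i) \<noteq> \<infinity>" "incseq A"
    using sigma_finite_measure.sigma_finite_incseq[OF sf] by metis
  define D where "D k n = A k \<inter> {\<omega>\<in>space M. ennreal ((1/2)^k) \<le> f n \<omega>}" for k n
  have "eventually (\<lambda>n. emeasure M (D k n) \<le> ennreal ((1/2)^k)) sequentially" for k
    unfolding D_def using A(1,3)
    by (intro function_quasi_norm_tendsto_zero_imp_measure_superlevel_small[OF qn f lim])
       (auto simp: less_top)
  then obtain s where s: "strict_mono s" "\<And>k. emeasure M (D k (s k)) \<le> ennreal ((1/2)^k)"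
    by (rule strict_mono_choice_eventually[where P = "\<lambda>k n. emeasure M (D k n) \<le> ennreal ((1/2)^k)"]) blast
  have "AE \<omega> in M. (\<lambda>k. f (s k) \<omega>) \<longlonglongrightarrow> 0"
    using A(1,2,4) f s(2) unfolding D_def by (rule AE_tendsto_zero_if_superlevel_sets_small)
  with s(1) show ?thesis by (rule that)
qed

lemma strongly_measurable_imp_borel_measurable:
  assumes "strongly_measurable M x"
  shows "x \<in> borel_measurable M"
proof -
  obtain s where s: "\<And>i. simple_function M (s i)"
    and lim: "\<And>\<omega>. \<omega> \<in> space M \<Longrightarrow> (\<lambda>i. s i \<omega>) \<longlonglongrightarrow> x \<omega>"
    using assms unfolding strongly_measurable_def by metis
  show ?thesis
    by (rule borel_measurable_LIMSEQ_metric[OF borel_measurable_simple_function[OF s] lim])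
qed

lemma strongly_measurable_diff:
  assumes "strongly_measurable M x" "strongly_measurable M y"
  shows "strongly_measurable M (\<lambda>\<omega>. x \<omega> - y \<omega>)"
proof -
  obtain s where s: "\<And>i. simple_function M (s i)" "\<And>\<omega>. \<omega> \<in> space M \<Longrightarrow> (\<lambda>i. s i \<omega>) \<longlonglongrightarrow> x \<omega>"
    using assms(1) unfolding strongly_measurable_def by metis
  obtain t where t: "\<And>i. simple_function M (t i)" "\<And>\<omega>. \<omega> \<in> space M \<Longrightarrow> (\<lambda>i. t i \<omega>) \<longlonglongrightarrow> y \<omega>"
    using assms(2) unfolding strongly_measurable_def by metis
  have "simple_function M (\<lambda>\<omega>. s i \<omega> - t i \<omega>)" for i
    by (rule simple_function_compose2[OF s(1) t(1)])
  moreover have "(\<lambda>i. s i \<omega> - t i \<omega>) \<longlonglongrightarrow> x \<omega> - y \<omega>" if "\<omega> \<in> space M" for \<omega>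
    using s(2) t(2) that by (intro tendsto_diff)
  ultimately show ?thesis
    unfolding strongly_measurable_def by (intro exI[of _ "\<lambda>i \<omega>. s i \<omega> - t i \<omega>"]) blast
qed

lemma strongly_measurable_ennreal_norm:
  assumes "strongly_measurable M x"
  shows "(\<lambda>\<omega>. ennreal (norm (x \<omega>))) \<in> borel_measurable M"
  using strongly_measurable_imp_borel_measurable[OF assms] by measurable

lemma function_quasi_norm_tendsto_imp_AE_subseq:
  fixes x :: "'a \<Rightarrow> 'b::banach" and y :: "nat \<Rightarrow> 'a \<Rightarrow> 'b"
  assumes sf: "sigma_finite_measure M" and qn: "function_quasi_norm M \<rho>"
    and x: "strongly_measurable M x" and y: "\<And>n. strongly_measurable M (y n)"
    and lim: "(\<lambda>n. \<rho> (\<lambda>\<omega>. ennreal (norm (x \<omega> - y n \<omega>)))) \<longlonglongrightarrow> 0"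
  obtains s where "strict_mono s" "AE \<omega> in M. (\<lambda>k. y (s k) \<omega>) \<longlonglongrightarrow> x \<omega>"
proof -
  have "(\<lambda>\<omega>. ennreal (norm (x \<omega> - y n \<omega>))) \<in> borel_measurable M" for n
    by (rule strongly_measurable_ennreal_norm[OF strongly_measurable_diff[OF x y]])
  then obtain s :: "nat \<Rightarrow> nat" where "strict_mono s"
    and AE_norm: "AE \<omega> in M. (\<lambda>k. ennreal (norm (x \<omega> - y (s k) \<omega>))) \<longlonglongrightarrow> 0"
    using function_quasi_norm_tendsto_zero_imp_AE_subseq[OF sf qn,
        where f = "\<lambda>n \<omega>. ennreal (norm (x \<omega> - y n \<omega>))"] lim by blast
  have "AE \<omega> in M. (\<lambda>k. y (s k) \<omega>) \<longlonglongrightarrow> x \<omega>"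
    using AE_norm
  proof eventually_elim
    case (elim \<omega>)
    then have "(\<lambda>k. norm (y (s k) \<omega> - x \<omega>)) \<longlonglongrightarrow> 0"
      by (simp add: ennreal_tendsto_0_iff norm_minus_commute)
    then show ?case by (simp add: tendsto_norm_zero_iff LIM_zero_iff)
  qed
  with \<open>strict_mono s\<close> show ?thesis by (rule that)
qed

lemma fatou_propertyD:
  fixes f :: "nat \<Rightarrow> 'a \<Rightarrow> ennreal"
  assumes "fatou_property M \<rho>" "\<And>n. f n \<in> borel_measurable M" "AE \<omega> in M. mono (\<lambda>n. f n \<omega>)"
  shows "\<rho> (\<lambda>\<omega>. SUP n. f n \<omega>) \<le> (SUP n. \<rho> (f n))"
  by (rule assms(1)[unfolded fatou_property_def, rule_format, OF assms(2,3)])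

lemma absolutely_continuous_fqnD:
  fixes f :: "nat \<Rightarrow> 'a \<Rightarrow> ennreal"
  assumes "absolutely_continuous_fqn M \<rho> g" "\<And>n. f n \<in> borel_measurable M"
    and "AE \<omega> in M. antimono (\<lambda>n. f n \<omega>)" "AE \<omega> in M. f 0 \<omega> \<le> g \<omega>"
  shows "(\<lambda>n. \<rho> (f n)) \<longlonglongrightarrow> \<rho> (\<lambda>\<omega>. INF n. f n \<omega>)"
  by (rule assms(1)[unfolded absolutely_continuous_fqn_def, THEN conjunct2, THEN conjunct2,
        rule_format, OF assms(2-4)])

lemma fatou_property_liminf:
  fixes z :: "nat \<Rightarrow> 'a \<Rightarrow> ennreal"
  assumes qn: "function_quasi_norm M \<rho>" and fat: "fatou_property M \<rho>"
    and z: "\<And>n. z n \<in> borel_measurable M"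
  shows "\<rho> (\<lambda>\<omega>. liminf (\<lambda>n. z n \<omega>)) \<le> liminf (\<lambda>n. \<rho> (z n))"
proof -
  define l where "l n \<omega> = (INF k\<in>{n..}. z k \<omega>)" for n \<omega>
  have l: "l n \<in> borel_measurable M" for n unfolding l_def using z by measurable
  have "AE \<omega> in M. mono (\<lambda>n. l n \<omega>)"
    by (auto simp: mono_def l_def intro!: INF_superset_mono)
  with fat l have "\<rho> (\<lambda>\<omega>. SUP n. l n \<omega>) \<le> (SUP n. \<rho> (l n))"
    by (rule fatou_propertyD)
  also have "\<dots> \<le> (SUP n. INF k\<in>{n..}. \<rho> (z k))"
  proof (rule SUP_mono', rule INF_greatest)
    fix n k :: nat assume "k \<in> {n..}"
    then show "\<rho> (l n) \<le> \<rho> (z k)"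
      by (intro function_quasi_norm_mono[OF qn l z] AE_I2) (auto simp: l_def intro: INF_lower)
  qed
  finally show ?thesis by (simp add: liminf_SUP_INF l_def)
qed

lemma absolutely_continuous_fqn_limsup:
  fixes z :: "nat \<Rightarrow> 'a \<Rightarrow> ennreal"
  assumes qn: "function_quasi_norm M \<rho>" and ac: "absolutely_continuous_fqn M \<rho> g"
    and z: "\<And>n. z n \<in> borel_measurable M" and dom: "AE \<omega> in M. \<forall>n. z n \<omega> \<le> g \<omega>"
  shows "limsup (\<lambda>n. \<rho> (z n)) \<le> \<rho> (\<lambda>\<omega>. limsup (\<lambda>n. z n \<omega>))"
proof -
  define h where "h n \<omega> = (SUP k\<in>{n..}. z k \<omega>)" for n \<omega>
  have h: "h n \<in> borel_measurable M" for n unfolding h_def using z by measurable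
  have "AE \<omega> in M. antimono (\<lambda>n. h n \<omega>)"
    by (auto simp: antimono_def h_def intro!: SUP_subset_mono)
  moreover have "AE \<omega> in M. h 0 \<omega> \<le> g \<omega>"
    using dom by eventually_elim (auto simp: h_def intro!: SUP_least)
  ultimately have "(\<lambda>n. \<rho> (h n)) \<longlonglongrightarrow> \<rho> (\<lambda>\<omega>. INF n. h n \<omega>)"
    by (rule absolutely_continuous_fqnD[OF ac h])
  then have lim: "(\<lambda>n. \<rho> (h n)) \<longlonglongrightarrow> \<rho> (\<lambda>\<omega>. limsup (\<lambda>n. z n \<omega>))"
    by (simp add: limsup_INF_SUP h_def)
  have "\<rho> (z n) \<le> \<rho> (h n)" for n
    by (intro function_quasi_norm_mono[OF qn z h] AE_I2) (auto simp: h_def intro: SUP_upper)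
  then have "limsup (\<lambda>n. \<rho> (z n)) \<le> limsup (\<lambda>n. \<rho> (h n))"
    by (intro Limsup_mono always_eventually) simp
  also have "\<dots> = \<rho> (\<lambda>\<omega>. limsup (\<lambda>n. z n \<omega>))"
    using lim by (simp add: lim_imp_Limsup)
  finally show ?thesis .
qed

lemma function_quasi_norm_dominated_convergence:
  fixes z :: "nat \<Rightarrow> 'a \<Rightarrow> ennreal"
  assumes qn: "function_quasi_norm M \<rho>" and fat: "fatou_property M \<rho>"
    and ac: "absolutely_continuous_fqn M \<rho> g"
    and z: "\<And>n. z n \<in> borel_measurable M" and f: "f \<in> borel_measurable M"
    and lim: "AE \<omega> in M. (\<lambda>n. z n \<omega>) \<longlonglongrightarrow> f \<omega>"
    and dom: "AE \<omega> in M. \<forall>n. z n \<omega> \<le> g \<omega>"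
  shows "(\<lambda>n. \<rho> (z n)) \<longlonglongrightarrow> \<rho> f"
proof -
  have liminf: "(\<lambda>\<omega>. liminf (\<lambda>n. z n \<omega>)) \<in> borel_measurable M"
    using z by measurable
  have limsup: "(\<lambda>\<omega>. limsup (\<lambda>n. z n \<omega>)) \<in> borel_measurable M"
    using z by measurable
  have "AE \<omega> in M. f \<omega> = liminf (\<lambda>n. z n \<omega>)"
    using lim by eventually_elim (simp add: lim_imp_Liminf)
  then have "\<rho> f = \<rho> (\<lambda>\<omega>. liminf (\<lambda>n. z n \<omega>))"
    by (rule function_quasi_norm_cong_AE[OF qn f liminf])
  also have "\<dots> \<le> liminf (\<lambda>n. \<rho> (z n))"
    by (rule fatou_property_liminf[OF qn fat z])
  finally have lower: "\<rho> f \<le> liminf (\<lambda>n. \<rho> (z n))" .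
  have "limsup (\<lambda>n. \<rho> (z n)) \<le> \<rho> (\<lambda>\<omega>. limsup (\<lambda>n. z n \<omega>))"
    by (rule absolutely_continuous_fqn_limsup[OF qn ac z dom])
  also have "\<dots> = \<rho> f"
  proof (rule function_quasi_norm_cong_AE[OF qn limsup f])
    show "AE \<omega> in M. limsup (\<lambda>n. z n \<omega>) = f \<omega>"
      using lim by eventually_elim (simp add: lim_imp_Limsup)
  qed
  finally have upper: "limsup (\<lambda>n. \<rho> (z n)) \<le> \<rho> f" .
  have "liminf (\<lambda>n. \<rho> (z n)) \<le> limsup (\<lambda>n. \<rho> (z n))"
    by (simp add: Liminf_le_Limsup)
  with lower upper have "liminf (\<lambda>n. \<rho> (z n)) = \<rho> f" "limsup (\<lambda>n. \<rho> (z n)) = \<rho> f"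
    by auto
  then show ?thesis by (simp add: tendsto_iff_Liminf_eq_Limsup)
qed

lemma LIMSEQ_of_subseq_LIMSEQ:
  fixes X :: "nat \<Rightarrow> 'a::topological_space"
  assumes "\<And>r :: nat \<Rightarrow> nat. strict_mono r \<Longrightarrow>
    \<exists>s :: nat \<Rightarrow> nat. strict_mono s \<and> (\<lambda>k. X (r (s k))) \<longlonglongrightarrow> L"
  shows "X \<longlonglongrightarrow> L"
proof (rule topological_tendstoI, rule ccontr)
  fix S assume "open S" "L \<in> S" and not_eventually: "\<not> eventually (\<lambda>n. X n \<in> S) sequentially"
  obtain r :: "nat \<Rightarrow> nat" where "strict_mono r" and r: "\<And>n. X (r n) \<notin> S"
    using not_eventually_sequentiallyD[OF not_eventually] by blast
  obtain s :: "nat \<Rightarrow> nat" where "(\<lambda>k. X (r (s k))) \<longlonglongrightarrow> L"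
    using assms[OF \<open>strict_mono r\<close>] by blast
  then have "eventually (\<lambda>k. X (r (s k)) \<in> S) sequentially"
    using \<open>open S\<close> \<open>L \<in> S\<close> by (rule topological_tendstoD)
  then obtain k where "X (r (s k)) \<in> S" by (auto simp: eventually_sequentially)
  with r show False by blast
qed

theorem proposition3p33:
  fixes M :: "'a measure" and \<rho> :: "('a \<Rightarrow> ennreal) \<Rightarrow> ennreal"
    and x :: "'a \<Rightarrow> 'b::banach" and xs :: "nat \<Rightarrow> 'a \<Rightarrow> 'b"
    and g :: "'a \<Rightarrow> ennreal"
  assumes "sigma_finite_measure M"
    and "function_quasi_norm M \<rho>"
    and "fatou_property M \<rho>"
    and "strongly_measurable M x"
    and "\<And>n. strongly_measurable M (xs n)"
    and "(\<lambda>n. \<rho> (\<lambda>\<omega>. ennreal (norm (x \<omega> - xs n \<omega>)))) \<longlonglongrightarrow> 0"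
    and "absolutely_continuous_fqn M \<rho> g"
    and "AE \<omega> in M. (SUP n. ennreal (norm (xs n \<omega>))) \<le> g \<omega>"
  shows "(\<lambda>n. \<rho> (\<lambda>\<omega>. ennreal (norm (xs n \<omega>)))) \<longlonglongrightarrow> \<rho> (\<lambda>\<omega>. ennreal (norm (x \<omega>)))"
proof (rule LIMSEQ_of_subseq_LIMSEQ)
  fix r :: "nat \<Rightarrow> nat" assume "strict_mono r"
  have "(\<lambda>n. \<rho> (\<lambda>\<omega>. ennreal (norm (x \<omega> - xs (r n) \<omega>)))) \<longlonglongrightarrow> 0"
    using LIMSEQ_subseq_LIMSEQ[OF assms(6) \<open>strict_mono r\<close>] by (simp add: comp_def)
  with assms(1,2,4,5) obtain s :: "nat \<Rightarrow> nat" where "strict_mono s"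
    and AE_lim: "AE \<omega> in M. (\<lambda>k. xs (r (s k)) \<omega>) \<longlonglongrightarrow> x \<omega>"
    by (rule function_quasi_norm_tendsto_imp_AE_subseq)
  from AE_lim have "AE \<omega> in M. (\<lambda>k. ennreal (norm (xs (r (s k)) \<omega>))) \<longlonglongrightarrow> ennreal (norm (x \<omega>))"
    by eventually_elim (intro tendsto_ennrealI tendsto_norm)
  moreover have "AE \<omega> in M. \<forall>k. ennreal (norm (xs (r (s k)) \<omega>)) \<le> g \<omega>"
    using assms(8) by eventually_elim (simp add: SUP_le_iff)
  moreover note strongly_measurable_ennreal_norm[OF assms(4)] strongly_measurable_ennreal_norm[OF assms(5)]
  ultimately have "(\<lambda>k. \<rho> (\<lambda>\<omega>. ennreal (norm (xs (r (s k)) \<omega>)))) \<longlonglongrightarrow> \<rho> (\<lambda>\<omega>. ennreal (norm (x \<omega>)))"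
    by (intro function_quasi_norm_dominated_convergence[OF assms(2,3,7)])
  with \<open>strict_mono s\<close> show "\<exists>s. strict_mono s \<and>
      (\<lambda>k. \<rho> (\<lambda>\<omega>. ennreal (norm (xs (r (s k)) \<omega>)))) \<longlonglongrightarrow> \<rho> (\<lambda>\<omega>. ennreal (norm (x \<omega>)))"
    by blast
qed

end
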